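(* $\lim_{\lambda\to\infty}\big(\sup_{x\ge0}\,(V(x,\lambda)-x)\big)=0$.
   Context: Fix constants $p>0$ (premium rate), $q>0$ (discount rate), $d>0$, $\beta>0$, $\underline{\lambda}\ge0$, and distribution functions $F_U,F_Y$ of strictly positive random variables with finite expectation. For an initial intensity $\lambda\ge\underline{\lambda}$ the claim intensity is the shot-noise process $\lambda_t=\underline{\lambda}+e^{-dt}(\lambda-\underline{\lambda})+\sum_{k=1}^{\widetilde N_t}Y_k e^{-d(t-T_k)}$, where $\widetilde N_t=\#\{k:T_k\le t\}$ is a Poisson process of rate $\beta$ with arrival times $T_k$ and the $Y_k$ are i.i.d. with distribution $F_Y$, independent of $\widetilde N$. Conditionally on $(\lambda_s)_{s\ge0}$, the claim counting process $N_t=\#\{j:\tau_j\le t\}$ is an inhomogeneous Poisson process with intensity $\lambda_t$ (a Cox process), and the claim sizes $U_j$ are i.i.d. with distribution $F_U$, independent of all the rest. For initial surplus $x\ge0$ the surplus is $X_t=x+pt-\sum_{j=1}^{N_t}U_j$, and $(\mathcal F_t)$ is the completed filtration generated by the intensity jumps $(T_k,Y_k)$ and the claims $(\tau_j,U_j)$ up to time $t$. The premium satisfies $p=(1+\eta)\mathbb E(U_1)\lambda_{\mathrm{av}}$ with $\eta>0$ and $\lambda_{\mathrm{av}}=\lim_{t\to\infty}\mathbb E(\int_0^t\lambda_sds)/t$. A dividend strategy $L=(L_t)_{t\ge0}$ is admissible, $L\in\Pi_{x,\lambda}$, if it is non-decreasing, càdlàg, $(\mathcal F_t)$-adapted, $L_0\ge0$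 and $L_t\le X_t$ for $t<\tau^L$, where $\tau^L=\inf\{t\ge0:X_t-L_{t^-}<0\}$ is the ruin time. Its value is $J(L;x,\lambda)=\mathbb E\big(\int_{0^-}^{\tau^L}e^{-qt}dL_t\big)$ and the optimal value function is $V(x,\lambda)=\sup_{L\in\Pi_{x,\lambda}}J(L;x,\lambda)$ for $x\ge0$, $\lambda\ge\underline{\lambda}$. *)

theory Defs
  imports "HOL-Probability.Probability"
begin

text \<open>A sample point is a sequence of
  i.i.d. quadruples ((E_k, Y_k), (G_j, U_j)): E_k ~ Exp(beta) are the interarrival
  times of the shot Poisson process, Y_k ~ F_Y its marks, G_j ~ Exp(1) the
  interarrival times of a unit-rate Poisson process, U_j ~ F_U the claim sizes.
  The claim process is the Cox process obtained by the random time change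
  N_t = #{j. Gamma_j <= Lambda_t}, Lambda_t = int_0^t lambda_s ds.\<close>

type_synonym omega = "nat \<Rightarrow> (real \<times> real) \<times> (real \<times> real)"

definition base_law :: "real \<Rightarrow> real measure \<Rightarrow> real measure \<Rightarrow> ((real \<times> real) \<times> (real \<times> real)) measure" where
  "base_law beta FY FU =
     (density lborel (exponential_density beta) \<Otimes>\<^sub>M FY) \<Otimes>\<^sub>M
     (density lborel (exponential_density 1) \<Otimes>\<^sub>M FU)"

definition Omega :: "real \<Rightarrow> real measure \<Rightarrow> real measure \<Rightarrow> omega measure" where
  "Omega beta FY FU = PiM UNIV (\<lambda>_::nat. base_law beta FY FU)"

text \<open>Arrival time of the (k+1)-th intensity jump and its mark.\<close>
definition Tj :: "nat \<Rightarrow> omega \<Rightarrow> real" where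
  "Tj k \<omega> = (\<Sum>i\<le>k. fst (fst (\<omega> i)))"

definition Yj :: "nat \<Rightarrow> omega \<Rightarrow> real" where
  "Yj k \<omega> = snd (fst (\<omega> k))"

definition Gam :: "nat \<Rightarrow> omega \<Rightarrow> real" where
  "Gam j \<omega> = (\<Sum>i\<le>j. fst (snd (\<omega> i)))"

definition Uj :: "nat \<Rightarrow> omega \<Rightarrow> real" where
  "Uj j \<omega> = snd (snd (\<omega> j))"

definition lam :: "real \<Rightarrow> real \<Rightarrow> real \<Rightarrow> real \<Rightarrow> omega \<Rightarrow> real" where
  "lam lb d l0 t \<omega> = lb + exp (- d * t) * (l0 - lb) +
     (\<Sum>k\<in>{k. Tj k \<omega> \<le> t}. Yj k \<omega> * exp (- d * (t - Tj k \<omega>)))"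

definition Lam :: "real \<Rightarrow> real \<Rightarrow> real \<Rightarrow> real \<Rightarrow> omega \<Rightarrow> real" where
  "Lam lb d l0 t \<omega> = (LBINT s:{0..t}. lam lb d l0 s \<omega>)"

definition tau :: "real \<Rightarrow> real \<Rightarrow> real \<Rightarrow> nat \<Rightarrow> omega \<Rightarrow> real" where
  "tau lb d l0 j \<omega> = Inf {t. 0 \<le> t \<and> Gam j \<omega> \<le> Lam lb d l0 t \<omega>}"

definition surplus :: "real \<Rightarrow> real \<Rightarrow> real \<Rightarrow> real \<Rightarrow> real \<Rightarrow> real \<Rightarrow> omega \<Rightarrow> real" where
  "surplus p lb d l0 x t \<omega> = x + p * t - (\<Sum>j\<in>{j. tau lb d l0 j \<omega> \<le> t}. Uj j \<omega>)"

definition gens :: "real \<Rightarrow> real \<Rightarrow> real \<Rightarrow> real \<Rightarrow> (omega \<Rightarrow> real) set" where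
  "gens lb d l0 t =
     (\<Union>k. {\<lambda>\<omega>. if Tj k \<omega> \<le> t then 1 else 0,
            \<lambda>\<omega>. if Tj k \<omega> \<le> t then Tj k \<omega> else 0,
            \<lambda>\<omega>. if Tj k \<omega> \<le> t then Yj k \<omega> else 0}) \<union>
     (\<Union>j. {\<lambda>\<omega>. if tau lb d l0 j \<omega> \<le> t then 1 else 0,
            \<lambda>\<omega>. if tau lb d l0 j \<omega> \<le> t then tau lb d l0 j \<omega> else 0,
            \<lambda>\<omega>. if tau lb d l0 j \<omega> \<le> t then Uj j \<omega> else 0})"

definition filt :: "omega measure \<Rightarrow> real \<Rightarrow> real \<Rightarrow> real \<Rightarrow> real \<Rightarrow> omega set set" where
  "filt S lb d l0 t = sigma_sets (space S)
     ({g -` B \<inter> space S | g B. g \<in> gens lb d l0 t \<and> B \<in> sets borel} \<union> null_sets (completion S))"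

definition Lleft :: "(real \<Rightarrow> omega \<Rightarrow> real) \<Rightarrow> real \<Rightarrow> omega \<Rightarrow> real" where
  "Lleft L t \<omega> = (if t \<le> 0 then 0 else Lim (at_left t) (\<lambda>s. L s \<omega>))"

text \<open>Ruin time tau^L (infinite if no ruin).\<close>
definition ruin_time :: "real \<Rightarrow> real \<Rightarrow> real \<Rightarrow> real \<Rightarrow> real \<Rightarrow> (real \<Rightarrow> omega \<Rightarrow> real) \<Rightarrow> omega \<Rightarrow> ereal" where
  "ruin_time p lb d l0 x L \<omega> =
     Inf (ereal ` {t. 0 \<le> t \<and> surplus p lb d l0 x t \<omega> - Lleft L t \<omega> < 0})"

definition admissible :: "omega measure \<Rightarrow> real \<Rightarrow> real \<Rightarrow> real \<Rightarrow> real \<Rightarrow> real \<Rightarrow> (real \<Rightarrow> omega \<Rightarrow> real) set" where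
  "admissible S p lb d l0 x = {L.
     (\<forall>\<omega>\<in>space S.
        mono_on {0..} (\<lambda>t. L t \<omega>) \<and>
        (\<forall>t\<ge>0. continuous (at_right t) (\<lambda>s. L s \<omega>)) \<and>
        (\<forall>t>0. \<exists>l. ((\<lambda>s. L s \<omega>) \<longlongrightarrow> l) (at_left t)) \<and>
        0 \<le> L 0 \<omega> \<and>
        (\<forall>t\<ge>0. ereal t < ruin_time p lb d l0 x L \<omega> \<longrightarrow> L t \<omega> \<le> surplus p lb d l0 x t \<omega>)) \<and>
     (\<forall>t\<ge>0. \<forall>B\<in>sets borel. (\<lambda>\<omega>. L t \<omega>) -` B \<inter> space S \<in> filt S lb d l0 t)}"

text \<open>Value of a strategy: E int_{[0,tau^L)} e^{-qt} dL_t, the Lebesgue-Stieltjes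
  measure of L (extended by 0 to negative times, so the initial lump L_0 is counted).\<close>
definition Jval :: "omega measure \<Rightarrow> real \<Rightarrow> real \<Rightarrow> real \<Rightarrow> real \<Rightarrow> real \<Rightarrow> real \<Rightarrow> (real \<Rightarrow> omega \<Rightarrow> real) \<Rightarrow> ereal" where
  "Jval S p q lb d l0 x L = enn2ereal (\<integral>\<^sup>+ \<omega>.
      (\<integral>\<^sup>+ s. indicator {s. 0 \<le> s \<and> ereal s < ruin_time p lb d l0 x L \<omega>} s * ennreal (exp (- q * s))
         \<partial>interval_measure (\<lambda>s. if s < 0 then 0 else L s \<omega>))
    \<partial>completion S)"

definition Vfun :: "real \<Rightarrow> real \<Rightarrow> real \<Rightarrow> real \<Rightarrow> real \<Rightarrow> real measure \<Rightarrow> real measure \<Rightarrow> real \<Rightarrow> real \<Rightarrow> ereal" where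
  "Vfun p q d beta lb FY FU x l0 =
     (SUP L\<in>admissible (Omega beta FY FU) p lb d l0 x. Jval (Omega beta FY FU) p q lb d l0 x L)"

end

theory Submission
  imports Defs
begin

text \<open>
  When the initial intensity \<lambda> is large, claims arrive in a burst: the integrated intensity
  over [0, \<epsilon>] is at least (\<lambda> - \<lambda>_low) e^(-d \<epsilon>) \<epsilon>.  Hence, for fixed m, with probability
  tending to one the first m + 1 claims all arrive before \<epsilon>, and for m large their total size
  exceeds p R with high probability.  On this event the surplus satisfies
  X_t \<le> x + p \<epsilon> + p t^2 / R for all t, and always X_t \<le> x + p t.  An admissible dividend
  process stays below the surplus before ruin, and writing e^(-q s) = P(T > s) for T ~ Exp(q)
  and applying Tonelli bounds its discounted value by E h(T), where h is the bound on the
  surplus.  Choosing \<epsilon>, R, m and then \<lambda> gives V(x, \<lambda>) \<le> x + \<delta> uniformly in x, while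
  paying no dividends shows V \<ge> 0.
\<close>

lemma ennreal_power_tendsto_zero:
  fixes c :: ennreal
  assumes "c < 1"
  shows "(\<lambda>n. c ^ n) \<longlonglongrightarrow> 0"
proof -
  obtain r where r: "c = ennreal r" "0 \<le> r" "r < 1"
    using assms by (cases c) auto
  have "(\<lambda>n. ennreal (r ^ n)) \<longlonglongrightarrow> ennreal 0"
    using r by (intro tendsto_ennrealI LIMSEQ_power_zero) simp
  then show ?thesis
    using r by (simp add: ennreal_power)
qed

lemma ereal_tendsto_zeroI:
  fixes f :: "'a \<Rightarrow> ereal"
  assumes nonneg: "\<forall>\<^sub>F y in F. 0 \<le> f y" and small: "\<And>\<delta>. 0 < \<delta> \<Longrightarrow> \<forall>\<^sub>F y in F. f y \<le> ereal \<delta>"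
  shows "(f \<longlongrightarrow> 0) F"
proof (rule order_tendstoI)
  fix a :: ereal assume "a < 0"
  from nonneg show "\<forall>\<^sub>F y in F. a < f y"
    by (rule eventually_mono) (use \<open>a < 0\<close> in \<open>rule less_le_trans\<close>)
next
  fix b :: ereal assume "0 < b"
  then obtain \<delta> where "0 < ereal \<delta>" "ereal \<delta> < b"
    using ereal_dense2 by blast
  with small[of \<delta>] show "\<forall>\<^sub>F y in F. f y < b"
    by (auto elim: eventually_mono)
qed

lemma AE_pair_measure_fst:
  assumes "sigma_finite_measure M1" "sigma_finite_measure M2"
    and "Measurable.pred M1 P" "AE x in M1. P x"
  shows "AE z in M1 \<Otimes>\<^sub>M M2. P (fst z)"
proof -
  interpret pair_sigma_finite M1 M2
    using assms by (simp add: pair_sigma_finite_def)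
  show ?thesis
    by (rule AE_pair_measure) (use assms in \<open>auto elim!: AE_mp\<close>)
qed

lemma AE_pair_measure_snd:
  assumes "sigma_finite_measure M1" "sigma_finite_measure M2"
    and "Measurable.pred M2 P" "AE x in M2. P x"
  shows "AE z in M1 \<Otimes>\<^sub>M M2. P (snd z)"
proof -
  interpret pair_sigma_finite M1 M2
    using assms by (simp add: pair_sigma_finite_def)
  show ?thesis
    by (rule AE_pair_measure) (use assms in auto)
qed

lemma (in prob_space) nn_integral_exp_neg_less_one:
  assumes [measurable]: "f \<in> borel_measurable M" and pos: "AE x in M. 0 < f x"
  shows "(\<integral>\<^sup>+ x. ennreal (exp (- f x)) \<partial>M) < 1"
proof -
  have "(\<integral>\<^sup>+ x. ennreal (exp (- f x)) \<partial>M) < (\<integral>\<^sup>+ x. 1 \<partial>M)"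
  proof (rule nn_integral_less)
    have "(\<integral>\<^sup>+ x. ennreal (exp (- f x)) \<partial>M) \<le> (\<integral>\<^sup>+ x. 1 \<partial>M)"
      using pos by (intro nn_integral_mono_AE) auto
    then show "(\<integral>\<^sup>+ x. ennreal (exp (- f x)) \<partial>M) \<noteq> \<infinity>"
      by (auto simp: emeasure_space_1 top_unique)
    show "AE x in M. ennreal (exp (- f x)) \<le> 1"
      using pos by eventually_elim auto
    show "\<not> (AE x in M. 1 \<le> ennreal (exp (- f x)))"
    proof
      assume "AE x in M. 1 \<le> ennreal (exp (- f x))"
      with pos have "AE x in M. False"
        by eventually_elim auto
      then show False
        by (simp add: AE_False)
    qed
  qed auto
  then show ?thesis
    by (simp add: emeasure_space_1)
qed

lemma (in prob_space) nn_integral_const_plus_indicators: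
  assumes "A \<in> events" and "B \<in> events"
  shows "(\<integral>\<^sup>+ x. a + c * (indicator A x + indicator B x) \<partial>M) = a + c * (emeasure M A + emeasure M B)"
  using assms by (simp add: nn_integral_add nn_integral_cmult emeasure_space_1)

lemma (in finite_measure) emeasure_greater_tendsto_zero:
  fixes X :: "'a \<Rightarrow> real"
  assumes [measurable]: "X \<in> borel_measurable M"
  shows "((\<lambda>K. emeasure M {x \<in> space M. K < X x}) \<longlongrightarrow> 0) at_top"
proof -
  interpret D: finite_borel_measure "distr M borel X"
    unfolding finite_borel_measure_def finite_borel_measure_axioms_def
    by (auto intro: finite_measure_distr)
  have compl: "measure M {x \<in> space M. K < X x} = measure M (space M) - cdf (distr M borel X) K" for K
  proof -
    have "{x \<in> space M. K < X x} = space M - {x \<in> space M. X x \<le> K}"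
      by auto
    moreover have "{x \<in> space M. X x \<le> K} \<in> sets M"
      by measurable
    ultimately show ?thesis
      by (simp add: finite_measure_compl cdf_def measure_distr vimage_def Int_def conj_commute)
  qed
  have "((\<lambda>K. measure M (space M) - cdf (distr M borel X) K)
      \<longlongrightarrow> measure M (space M) - measure M (space M)) at_top"
    using D.cdf_lim_at_top by (intro tendsto_diff tendsto_const) (simp add: measure_distr)
  then have "((\<lambda>K. ennreal (measure M (space M) - cdf (distr M borel X) K)) \<longlongrightarrow> ennreal 0) at_top"
    by (intro tendsto_ennrealI) simp
  then show ?thesis
    by (simp add: emeasure_eq_measure compl)
qed

section \<open>Lower tails of sums of i.i.d. positive variables\<close>

context
  fixes M :: "'a measure"
  assumes M: "prob_space M"
begin

interpretation iid: product_prob_space "\<lambda>_::nat. M" UNIV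
  using M by (simp add: product_prob_space_def product_prob_space_axioms_def
      product_sigma_finite_def prob_space_imp_sigma_finite)

lemma nn_integral_PiM_iid_prod:
  fixes J :: "nat set"
  assumes [measurable]: "g \<in> borel_measurable M" and J: "finite J"
  shows "(\<integral>\<^sup>+ \<omega>. (\<Prod>i\<in>J. g (\<omega> i)) \<partial>PiM UNIV (\<lambda>_::nat. M)) = (\<integral>\<^sup>+ x. g x \<partial>M) ^ card J"
proof -
  have "(\<integral>\<^sup>+ \<omega>. (\<Prod>i\<in>J. g (\<omega> i)) \<partial>PiM UNIV (\<lambda>_::nat. M))
      = (\<integral>\<^sup>+ \<omega>. (\<Prod>i\<in>J. g (\<omega> i)) \<partial>distr (PiM UNIV (\<lambda>_::nat. M)) (PiM J (\<lambda>_. M)) (\<lambda>\<omega>. restrict \<omega> J))"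
    by (subst nn_integral_distr) (auto intro!: nn_integral_cong prod.cong)
  also have "\<dots> = (\<integral>\<^sup>+ \<omega>. (\<Prod>i\<in>J. g (\<omega> i)) \<partial>PiM J (\<lambda>_. M))"
    using J by (subst iid.distr_PiM_restrict_finite) auto
  also have "\<dots> = (\<Prod>i\<in>J. \<integral>\<^sup>+ x. g x \<partial>M)"
    using J by (intro iid.product_nn_integral_prod) auto
  finally show ?thesis
    by simp
qed

lemma emeasure_PiM_iid_sum_le:
  fixes f :: "'a \<Rightarrow> real" and J :: "nat set"
  assumes [measurable]: "f \<in> borel_measurable M" and J: "finite J"
  shows "emeasure (PiM UNIV (\<lambda>_::nat. M)) {\<omega> \<in> space (PiM UNIV (\<lambda>_::nat. M)). (\<Sum>i\<in>J. f (\<omega> i)) \<le> K}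
    \<le> ennreal (exp K) * (\<integral>\<^sup>+ x. ennreal (exp (- f x)) \<partial>M) ^ card J"
proof -
  let ?P = "PiM UNIV (\<lambda>_::nat. M)"
  have "emeasure ?P {\<omega> \<in> space ?P. (\<Sum>i\<in>J. f (\<omega> i)) \<le> K}
      = (\<integral>\<^sup>+ \<omega>. indicator {\<omega> \<in> space ?P. (\<Sum>i\<in>J. f (\<omega> i)) \<le> K} \<omega> \<partial>?P)"
    by (intro nn_integral_indicator[symmetric]) measurable
  also have "\<dots> \<le> (\<integral>\<^sup>+ \<omega>. ennreal (exp K) * (\<Prod>i\<in>J. ennreal (exp (- f (\<omega> i)))) \<partial>?P)"
  proof (intro nn_integral_mono)
    fix \<omega>
    have "(\<Prod>i\<in>J. ennreal (exp (- f (\<omega> i)))) = ennreal (exp (- (\<Sum>i\<in>J. f (\<omega> i))))"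
      using J by (simp add: prod_ennreal exp_sum sum_negf[symmetric])
    then have "ennreal (exp K) * (\<Prod>i\<in>J. ennreal (exp (- f (\<omega> i))))
        = ennreal (exp (K - (\<Sum>i\<in>J. f (\<omega> i))))"
      by (simp add: ennreal_mult'[symmetric] exp_add[symmetric])
    then show "indicator {\<omega> \<in> space ?P. (\<Sum>i\<in>J. f (\<omega> i)) \<le> K} \<omega>
        \<le> ennreal (exp K) * (\<Prod>i\<in>J. ennreal (exp (- f (\<omega> i))))"
      by (auto split: split_indicator)
  qed
  also have "\<dots> = ennreal (exp K) * (\<integral>\<^sup>+ x. ennreal (exp (- f x)) \<partial>M) ^ card J"
    using nn_integral_PiM_iid_prod[of "\<lambda>x. ennreal (exp (- f x))" J] J
    by (simp add: nn_integral_cmult)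
  finally show ?thesis .
qed

lemma emeasure_PiM_iid_partial_sum_le_tendsto_zero:
  fixes f :: "'a \<Rightarrow> real"
  assumes [measurable]: "f \<in> borel_measurable M" and pos: "AE x in M. 0 < f x"
  shows "(\<lambda>n. emeasure (PiM UNIV (\<lambda>_::nat. M)) {\<omega> \<in> space (PiM UNIV (\<lambda>_::nat. M)). (\<Sum>i\<le>n. f (\<omega> i)) \<le> K})
    \<longlonglongrightarrow> 0"
proof -
  let ?c = "\<integral>\<^sup>+ x. ennreal (exp (- f x)) \<partial>M"
  have "?c < 1"
    using M pos by (intro prob_space.nn_integral_exp_neg_less_one) auto
  then have "(\<lambda>n. ennreal (exp K) * ?c ^ Suc n) \<longlonglongrightarrow> ennreal (exp K) * 0"
    by (intro ennreal_tendsto_cmult LIMSEQ_Suc ennreal_power_tendsto_zero) auto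
  then have lim: "(\<lambda>n. ennreal (exp K) * ?c ^ Suc n) \<longlonglongrightarrow> 0"
    by simp
  have "emeasure (PiM UNIV (\<lambda>_::nat. M))
      {\<omega> \<in> space (PiM UNIV (\<lambda>_::nat. M)). (\<Sum>i\<le>n. f (\<omega> i)) \<le> K} \<le> ennreal (exp K) * ?c ^ Suc n" for n
    using emeasure_PiM_iid_sum_le[of f "{..n}" K] by simp
  then show ?thesis
    by (intro tendsto_sandwich[OF _ _ tendsto_const lim]) (auto simp del: power_Suc)
qed

lemma AE_PiM_iid_partial_sums_unbounded:
  fixes f :: "'a \<Rightarrow> real"
  assumes [measurable]: "f \<in> borel_measurable M" and pos: "AE x in M. 0 < f x"
  shows "AE \<omega> in PiM UNIV (\<lambda>_::nat. M). \<forall>K. \<exists>n. K < (\<Sum>i\<le>n. f (\<omega> i))"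
proof (rule AE_I')
  let ?P = "PiM UNIV (\<lambda>_::nat. M)"
  define N where "N K = {\<omega> \<in> space ?P. \<forall>n. (\<Sum>i\<le>n. f (\<omega> i)) \<le> real K}" for K :: nat
  have "N K \<in> null_sets ?P" for K
  proof -
    have [measurable]: "N K \<in> sets ?P"
      unfolding N_def by measurable
    have "emeasure ?P (N K) \<le> 0"
    proof (rule LIMSEQ_le_const[OF emeasure_PiM_iid_partial_sum_le_tendsto_zero[OF _ pos]])
      show "\<exists>n0. \<forall>n\<ge>n0. emeasure ?P (N K)
          \<le> emeasure ?P {\<omega> \<in> space ?P. (\<Sum>i\<le>n. f (\<omega> i)) \<le> real K}"
        by (intro exI allI impI emeasure_mono) (auto simp: N_def)
    qed simp
    then show ?thesis
      by auto
  qed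
  then show "(\<Union>K. N K) \<in> null_sets ?P"
    by blast
  show "{\<omega> \<in> space ?P. \<not> (\<forall>K. \<exists>n. K < (\<Sum>i\<le>n. f (\<omega> i)))} \<subseteq> (\<Union>K. N K)"
  proof
    fix \<omega> assume "\<omega> \<in> {\<omega> \<in> space ?P. \<not> (\<forall>K. \<exists>n. K < (\<Sum>i\<le>n. f (\<omega> i)))}"
    then obtain K where "\<omega> \<in> space ?P" and "\<forall>n. (\<Sum>i\<le>n. f (\<omega> i)) \<le> K"
      by (auto simp: not_less)
    then have "\<omega> \<in> N (nat \<lceil>K\<rceil>)"
      unfolding N_def by (auto intro: order_trans[OF _ real_nat_ceiling_ge])
    then show "\<omega> \<in> (\<Union>K. N K)"
      by blast
  qed
qed

end

section \<open>Discounting against a Stieltjes measure\<close>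

lemma nn_integral_exponential_density_greaterThan:
  fixes q s :: real
  assumes "0 < q" "0 \<le> s"
  shows "(\<integral>\<^sup>+ r. ennreal (exponential_density q r) * indicator {s<..} r \<partial>lborel) = exp (- q * s)"
proof -
  have "(\<integral>\<^sup>+ r. ennreal (exponential_density q r) * indicator {s<..} r \<partial>lborel)
      = (\<integral>\<^sup>+ r. ennreal (q * exp (- q * r)) * indicator {s..} r \<partial>lborel)"
    using AE_lborel_singleton[of s] assms
    by (intro nn_integral_cong_AE, elim eventually_mono)
      (auto simp: exponential_density_def mult.commute split: split_indicator)
  also have "\<dots> = ennreal (0 - (- exp (- q * s)))"
  proof (rule nn_integral_FTC_atLeast)
    show "((\<lambda>r. - exp (- q * r)) \<longlongrightarrow> 0) at_top"
      using assms by real_asymp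
  qed (use assms in \<open>auto intro!: derivative_eq_intros\<close>)
  finally show ?thesis
    by simp
qed

lemma nn_integral_exponential_density_quadratic:
  fixes q a b c :: real
  assumes q: "0 < q" and abc: "0 \<le> a" "0 \<le> b" "0 \<le> c"
  shows "(\<integral>\<^sup>+ r. ennreal (exponential_density q r) * ennreal (a + b * r\<^sup>2 + c * r) \<partial>lborel)
    = ennreal (a + 2 * b / q\<^sup>2 + c / q)"
proof -
  let ?e = "exponential_density q"
  have e_nonneg: "0 \<le> ?e r * r ^ i" for r i
    using q by (auto simp: exponential_density_def)
  have moment: "(\<integral>\<^sup>+ r. ennreal (?e r * (k * r ^ i)) \<partial>lborel) = ennreal (k * (fact i / q ^ i))"
    if "0 \<le> k" for k i
  proof -
    have "(\<integral>\<^sup>+ r. ennreal (?e r * (k * r ^ i)) \<partial>lborel) = (\<integral>\<^sup>+ r. ennreal k * ennreal (?e r * r ^ i) \<partial>lborel)"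
      using that e_nonneg by (intro nn_integral_cong) (simp add: ennreal_mult[symmetric] mult.left_commute)
    also have "\<dots> = ennreal k * ennreal (fact i / q ^ i)"
      using nn_integral_erlang_ith_moment[OF q, of 0 i] q
      by (subst nn_integral_cmult) (auto simp: exponential_density_def)
    finally show ?thesis
      using that by (simp add: ennreal_mult'[symmetric])
  qed
  have "ennreal (?e r) * ennreal (a + b * r\<^sup>2 + c * r)
      = ennreal (?e r * (a * r ^ 0)) + ennreal (?e r * (b * r ^ 2)) + ennreal (?e r * (c * r ^ 1))" for r
    using q abc by (cases "0 \<le> r")
      (auto simp: exponential_density_def ennreal_mult[symmetric] ennreal_plus[symmetric] algebra_simps
        simp del: ennreal_plus)
  then have "(\<integral>\<^sup>+ r. ennreal (?e r) * ennreal (a + b * r\<^sup>2 + c * r) \<partial>lborel)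
      = (\<integral>\<^sup>+ r. ennreal (?e r * (a * r ^ 0)) \<partial>lborel) + (\<integral>\<^sup>+ r. ennreal (?e r * (b * r ^ 2)) \<partial>lborel)
        + (\<integral>\<^sup>+ r. ennreal (?e r * (c * r ^ 1)) \<partial>lborel)"
    by (simp add: nn_integral_add)
  also have "\<dots> = ennreal (a * (fact 0 / q ^ 0)) + ennreal (b * (fact 2 / q ^ 2)) + ennreal (c * (fact 1 / q ^ 1))"
    by (simp only: moment abc)
  also have "\<dots> = ennreal (a + 2 * b / q\<^sup>2 + c / q)"
    using q abc by (simp add: ennreal_plus[symmetric] del: ennreal_plus)
  finally show ?thesis .
qed

text \<open>Writing the discount factor as an exponential tail probability and applying Tonelli.\<close>

lemma nn_integral_interval_measure_exp_discount:
  fixes F :: "real \<Rightarrow> real"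
  assumes mono: "\<And>x y. x \<le> y \<Longrightarrow> F x \<le> F y" and rc: "\<And>a. continuous (at_right a) F"
    and q: "0 < q" and [measurable]: "A \<in> sets borel" and A: "A \<subseteq> {0..}"
  shows "(\<integral>\<^sup>+ s. indicator A s * ennreal (exp (- q * s)) \<partial>interval_measure F)
    = (\<integral>\<^sup>+ r. ennreal (exponential_density q r) * emeasure (interval_measure F) (A \<inter> {..<r}) \<partial>lborel)"
proof -
  let ?\<mu> = "interval_measure F" and ?e = "exponential_density q"
  interpret \<mu>: sigma_finite_measure ?\<mu>
    by (rule sigma_finite_interval_measure[OF mono rc])
  interpret pair_sigma_finite ?\<mu> lborel ..
  have [measurable]: "Measurable.pred (borel \<Otimes>\<^sub>M borel) (\<lambda>x :: real \<times> real. snd x \<in> {fst x<..})"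
    by (simp add: greaterThan_iff) measurable
  have "(\<integral>\<^sup>+ s. indicator A s * ennreal (exp (- q * s)) \<partial>?\<mu>)
      = (\<integral>\<^sup>+ s. \<integral>\<^sup>+ r. indicator A s * (ennreal (?e r) * indicator {s<..} r) \<partial>lborel \<partial>?\<mu>)"
    using A q by (intro nn_integral_cong)
      (auto simp: nn_integral_cmult nn_integral_exponential_density_greaterThan split: split_indicator)
  also have "\<dots> = (\<integral>\<^sup>+ r. \<integral>\<^sup>+ s. indicator A s * (ennreal (?e r) * indicator {s<..} r) \<partial>?\<mu> \<partial>lborel)"
    by (rule Fubini'[symmetric]) measurable
  also have "\<dots> = (\<integral>\<^sup>+ r. ennreal (?e r) * emeasure ?\<mu> (A \<inter> {..<r}) \<partial>lborel)"
  proof (intro nn_integral_cong)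
    fix r
    have "(\<integral>\<^sup>+ s. indicator A s * (ennreal (?e r) * indicator {s<..} r) \<partial>?\<mu>)
        = (\<integral>\<^sup>+ s. ennreal (?e r) * indicator (A \<inter> {..<r}) s \<partial>?\<mu>)"
      by (intro nn_integral_cong) (auto split: split_indicator)
    then show "(\<integral>\<^sup>+ s. indicator A s * (ennreal (?e r) * indicator {s<..} r) \<partial>?\<mu>)
        = ennreal (?e r) * emeasure ?\<mu> (A \<inter> {..<r})"
      by (simp add: nn_integral_cmult_indicator)
  qed
  finally show ?thesis .
qed

lemma emeasure_interval_measure_Ioo_le:
  fixes F :: "real \<Rightarrow> real"
  assumes mono: "\<And>x y. x \<le> y \<Longrightarrow> F x \<le> F y" and rc: "\<And>a. continuous (at_right a) F"
    and bound: "\<And>t. a < t \<Longrightarrow> t < b \<Longrightarrow> F t - F a \<le> c"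
  shows "emeasure (interval_measure F) {a<..<b} \<le> ennreal c"
proof -
  define I where "I n = {a<..b - 1 / Suc n}" for n :: nat
  have "{a<..<b} \<subseteq> (\<Union>n. I n)"
  proof
    fix t assume t: "t \<in> {a<..<b}"
    then obtain n where "1 / Suc n < b - t"
      by (metis diff_gt_0_iff_gt greaterThanLessThan_iff nat_approx_posE)
    with t have "t \<in> I n"
      by (simp add: I_def)
    then show "t \<in> (\<Union>n. I n)"
      by blast
  qed
  moreover have "incseq I"
  proof (rule incseq_SucI)
    fix n
    have "1 / real (Suc (Suc n)) \<le> 1 / real (Suc n)"
      by (simp add: frac_le)
    then show "I n \<subseteq> I (Suc n)"
      by (auto simp: I_def)
  qed
  ultimately have "emeasure (interval_measure F) {a<..<b} \<le> (SUP n. emeasure (interval_measure F) (I n))"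
    by (subst SUP_emeasure_incseq) (auto intro!: emeasure_mono simp: I_def)
  also have "\<dots> \<le> ennreal c"
  proof (rule SUP_least)
    fix n
    have "b - 1 / Suc n < b"
      by simp
    then show "emeasure (interval_measure F) (I n) \<le> ennreal c"
      using bound[of "b - 1 / Suc n"]
      by (cases "a < b - 1 / Suc n") (auto simp: I_def emeasure_interval_measure_Ioc_eq[OF mono rc] ennreal_leI)
  qed
  finally show ?thesis .
qed

lemma mono_extend_by_zero:
  fixes f :: "real \<Rightarrow> real"
  assumes "mono_on {0..} f" and "0 \<le> f 0"
  shows "mono (\<lambda>s. if s < 0 then 0 else f s)"
proof (rule monoI)
  fix x y :: real assume "x \<le> y"
  then show "(if x < 0 then 0 else f x) \<le> (if y < 0 then 0 else f y)"
    using assms mono_onD[OF assms(1), of 0 y] mono_onD[OF assms(1), of x y] by auto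
qed

lemma continuous_at_right_extend_by_zero:
  fixes f :: "real \<Rightarrow> real"
  assumes "\<And>t. 0 \<le> t \<Longrightarrow> continuous (at_right t) f"
  shows "continuous (at_right a) (\<lambda>s. if s < 0 then 0 else f s)"
proof (cases "a < 0")
  case True
  then have "\<forall>\<^sub>F s in at_right a. (if s < 0 then 0 else f s) = 0"
    by (subst eventually_at_right[OF True]) auto
  with True show ?thesis
    unfolding continuous_within by (simp add: tendsto_eventually)
next
  case False
  have "\<forall>\<^sub>F s in at_right a. f s = (if s < 0 then 0 else f s)"
    using eventually_at_right_less[of a] by eventually_elim (use False in auto)
  moreover have "(f \<longlongrightarrow> f a) (at_right a)"
    using assms False by (simp add: continuous_within)
  ultimately show ?thesis
    using False unfolding continuous_within by (simp add: tendsto_cong)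
qed

lemma emeasure_interval_measure_before_le:
  fixes F :: "real \<Rightarrow> real" and \<tau> :: ereal
  assumes mono: "\<And>x y. x \<le> y \<Longrightarrow> F x \<le> F y" and rc: "\<And>a. continuous (at_right a) F"
    and neg: "\<And>s. s < 0 \<Longrightarrow> F s = 0" and "0 \<le> c"
    and bound: "\<And>t. 0 \<le> t \<Longrightarrow> t < r \<Longrightarrow> ereal t < \<tau> \<Longrightarrow> F t \<le> c"
  shows "emeasure (interval_measure F) ({s. 0 \<le> s \<and> ereal s < \<tau>} \<inter> {..<r}) \<le> ennreal c"
proof -
  define \<beta> where "\<beta> = (if \<tau> < ereal r then real_of_ereal \<tau> else r)"
  have "{s. 0 \<le> s \<and> ereal s < \<tau>} \<inter> {..<r} \<subseteq> {-1<..<\<beta>}"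
    unfolding \<beta>_def by (cases \<tau>) auto
  then have "emeasure (interval_measure F) ({s. 0 \<le> s \<and> ereal s < \<tau>} \<inter> {..<r})
      \<le> emeasure (interval_measure F) {-1<..<\<beta>}"
    by (intro emeasure_mono) simp_all
  also have "\<dots> \<le> ennreal c"
  proof (rule emeasure_interval_measure_Ioo_le[OF mono rc])
    fix t assume t: "-1 < t" "t < \<beta>"
    show "F t - F (-1) \<le> c"
    proof (cases "t < 0")
      case False
      with t have "t < r" "ereal t < \<tau>"
        unfolding \<beta>_def by (cases \<tau>; auto split: if_splits)+
      with False show ?thesis
        using bound neg by simp
    qed (use neg \<open>0 \<le> c\<close> in simp)
  qed
  finally show ?thesis .
qed

lemma nn_integral_discounted_le_quadratic:
  fixes L :: "real \<Rightarrow> real" and \<tau> :: ereal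
  assumes mono: "mono_on {0..} L" and rc: "\<And>t. 0 \<le> t \<Longrightarrow> continuous (at_right t) L"
    and L0: "0 \<le> L 0" and q: "0 < q" and abc: "0 \<le> a" "0 \<le> b" "0 \<le> c"
    and bound: "\<And>t. 0 \<le> t \<Longrightarrow> ereal t < \<tau> \<Longrightarrow> L t \<le> a + b * t\<^sup>2 + c * t"
  shows "(\<integral>\<^sup>+ s. indicator {s. 0 \<le> s \<and> ereal s < \<tau>} s * ennreal (exp (- q * s))
      \<partial>interval_measure (\<lambda>s. if s < 0 then 0 else L s)) \<le> ennreal (a + 2 * b / q\<^sup>2 + c / q)"
proof -
  define F where "F s = (if s < 0 then 0 else L s)" for s
  define A where "A = {s. 0 \<le> s \<and> ereal s < \<tau>}"
  have F_mono: "F x \<le> F y" if "x \<le> y" for x y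
    using monoD[OF mono_extend_by_zero[OF mono L0] that] unfolding F_def by simp
  have F_rc: "continuous (at_right x) F" for x
    unfolding F_def by (rule continuous_at_right_extend_by_zero[OF rc])
  have [measurable]: "A \<in> sets borel"
    unfolding A_def by measurable
  have mass: "emeasure (interval_measure F) (A \<inter> {..<r}) \<le> ennreal (a + b * r\<^sup>2 + c * r)"
    if r: "0 \<le> r" for r
    unfolding A_def
  proof (rule emeasure_interval_measure_before_le[OF F_mono F_rc])
    fix t assume t: "0 \<le> t" "t < r" "ereal t < \<tau>"
    then have "L t \<le> a + b * t\<^sup>2 + c * t"
      by (intro bound)
    also have "\<dots> \<le> a + b * r\<^sup>2 + c * r"
      using t abc by (simp add: add_mono mult_left_mono power_mono)
    finally show "F t \<le> a + b * r\<^sup>2 + c * r"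
      using t by (simp add: F_def)
  qed (use abc r in \<open>simp_all add: F_def\<close>)
  have "(\<integral>\<^sup>+ s. indicator A s * ennreal (exp (- q * s)) \<partial>interval_measure F)
      = (\<integral>\<^sup>+ r. ennreal (exponential_density q r) * emeasure (interval_measure F) (A \<inter> {..<r}) \<partial>lborel)"
    by (rule nn_integral_interval_measure_exp_discount[OF F_mono F_rc q]) (auto simp: A_def)
  also have "\<dots> \<le> (\<integral>\<^sup>+ r. ennreal (exponential_density q r) * ennreal (a + b * r\<^sup>2 + c * r) \<partial>lborel)"
  proof (rule nn_integral_mono)
    fix r :: real
    show "ennreal (exponential_density q r) * emeasure (interval_measure F) (A \<inter> {..<r})
        \<le> ennreal (exponential_density q r) * ennreal (a + b * r\<^sup>2 + c * r)"
      using mass[of r] by (cases "0 \<le> r") (auto simp: exponential_density_def intro!: mult_left_mono)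
  qed
  also have "\<dots> = ennreal (a + 2 * b / q\<^sup>2 + c / q)"
    by (rule nn_integral_exponential_density_quadratic[OF q abc])
  finally show ?thesis
    unfolding F_def A_def .
qed

section \<open>The canonical probability space\<close>

lemma AE_exponential_density_pos: "AE x in density lborel (exponential_density l). 0 < x"
proof -
  have "AE x in lborel. 0 < ennreal (exponential_density l x) \<longrightarrow> 0 < x"
    using AE_lborel_singleton[of 0] by eventually_elim (auto simp: exponential_density_def)
  then show ?thesis
    by (subst AE_density) auto
qed

definition regular_path :: "omega \<Rightarrow> bool" where
  "regular_path \<omega> \<longleftrightarrow>
     (\<forall>i. 0 < fst (fst (\<omega> i)) \<and> 0 < snd (fst (\<omega> i)) \<and> 0 < fst (snd (\<omega> i)) \<and> 0 < snd (snd (\<omega> i))) \<and>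
     (\<forall>K. \<exists>k. K < Tj k \<omega>) \<and> (\<forall>K. \<exists>k. K < Gam k \<omega>) \<and> (\<forall>K. \<exists>k. K < (\<Sum>i\<le>k. Yj i \<omega>))"

locale shot_noise_model =
  fixes beta :: real and FY FU :: "real measure"
  assumes beta: "0 < beta"
    and FY: "prob_space FY" "sets FY = sets borel" "AE y in FY. 0 < y"
    and FU: "prob_space FU" "sets FU = sets borel" "AE u in FU. 0 < u"
begin

abbreviation "Exp_beta \<equiv> density lborel (exponential_density beta)"
abbreviation "Exp_one \<equiv> density lborel (exponential_density 1)"
abbreviation "B \<equiv> base_law beta FY FU"
abbreviation "S \<equiv> Omega beta FY FU"

lemma sets_FY [measurable_cong]: "sets FY = sets borel"
  and sets_FU [measurable_cong]: "sets FU = sets borel"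
  using FY FU by simp_all

lemma prob_space_factors:
  "prob_space Exp_beta" "prob_space Exp_one" "prob_space (Exp_beta \<Otimes>\<^sub>M FY)" "prob_space (Exp_one \<Otimes>\<^sub>M FU)"
  using beta FY FU by (auto intro!: prob_space_pair prob_space_exponential_density)

lemma prob_space_base_law: "prob_space B"
  unfolding base_law_def by (intro prob_space_pair prob_space_factors)

lemma base_law_components_measurable [measurable]:
  "(\<lambda>z. fst (fst z)) \<in> borel_measurable B" "(\<lambda>z. snd (fst z)) \<in> borel_measurable B"
  "(\<lambda>z. fst (snd z)) \<in> borel_measurable B" "(\<lambda>z. snd (snd z)) \<in> borel_measurable B"
  unfolding base_law_def by measurable

lemma Omega_component_measurable [measurable]: "(\<lambda>\<omega>. \<omega> i) \<in> measurable S B"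
  unfolding Omega_def by measurable

lemma space_Omega: "space S = UNIV"
proof -
  have "space B = UNIV"
    using sets_eq_imp_space_eq[OF sets_FY] sets_eq_imp_space_eq[OF sets_FU]
    by (simp add: base_law_def space_pair_measure)
  then show ?thesis
    by (simp add: Omega_def space_PiM)
qed

lemma prob_space_Omega: "prob_space S"
  unfolding Omega_def by (intro prob_space_PiM prob_space_base_law)

lemma AE_base_law_pos:
  "AE z in B. 0 < fst (fst z)" "AE z in B. 0 < snd (fst z)"
  "AE z in B. 0 < fst (snd z)" "AE z in B. 0 < snd (snd z)"
proof -
  have sf: "sigma_finite_measure Exp_beta" "sigma_finite_measure Exp_one" "sigma_finite_measure FY"
    "sigma_finite_measure FU" "sigma_finite_measure (Exp_beta \<Otimes>\<^sub>M FY)" "sigma_finite_measure (Exp_one \<Otimes>\<^sub>M FU)"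
    using prob_space_factors FY FU by (auto intro: prob_space_imp_sigma_finite)
  show "AE z in B. 0 < fst (fst z)" "AE z in B. 0 < snd (fst z)"
    unfolding base_law_def
    by (rule AE_pair_measure_fst[where P="\<lambda>z. 0 < fst z", OF sf(5,6) _
          AE_pair_measure_fst[OF sf(1,3) _ AE_exponential_density_pos]], measurable)
      (rule AE_pair_measure_fst[where P="\<lambda>z. 0 < snd z", OF sf(5,6) _
          AE_pair_measure_snd[OF sf(1,3) _ FY(3)]], measurable)
  show "AE z in B. 0 < fst (snd z)" "AE z in B. 0 < snd (snd z)"
    unfolding base_law_def
    by (rule AE_pair_measure_snd[where P="\<lambda>z. 0 < fst z", OF sf(5,6) _
          AE_pair_measure_fst[OF sf(2,4) _ AE_exponential_density_pos]], measurable)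
      (rule AE_pair_measure_snd[where P="\<lambda>z. 0 < snd z", OF sf(5,6) _
          AE_pair_measure_snd[OF sf(2,4) _ FU(3)]], measurable)
qed

lemma AE_Omega_component: "AE z in B. P z \<Longrightarrow> AE \<omega> in S. P (\<omega> i)"
proof -
  interpret product_prob_space "\<lambda>_::nat. B" UNIV
    using prob_space_base_law
    by (simp add: product_prob_space_def product_prob_space_axioms_def product_sigma_finite_def
        prob_space_imp_sigma_finite)
  show "AE z in B. P z \<Longrightarrow> AE \<omega> in S. P (\<omega> i)"
    unfolding Omega_def by (rule AE_component) auto
qed

lemma AE_regular_path: "AE \<omega> in S. regular_path \<omega>"
proof -
  have "AE \<omega> in S. \<forall>i. 0 < fst (fst (\<omega> i)) \<and> 0 < snd (fst (\<omega> i)) \<and> 0 < fst (snd (\<omega> i)) \<and> 0 < snd (snd (\<omega> i))"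
    unfolding AE_all_countable using AE_base_law_pos
    by (intro allI AE_Omega_component) (auto elim!: AE_mp intro!: AE_I2)
  moreover have "AE \<omega> in S. \<forall>K. \<exists>k. K < Tj k \<omega>" "AE \<omega> in S. \<forall>K. \<exists>k. K < Gam k \<omega>"
    "AE \<omega> in S. \<forall>K. \<exists>k. K < (\<Sum>i\<le>k. Yj i \<omega>)"
    unfolding Tj_def Gam_def Yj_def Omega_def
    by (intro AE_PiM_iid_partial_sums_unbounded prob_space_base_law base_law_components_measurable
        AE_base_law_pos)+
  ultimately show ?thesis
    unfolding regular_path_def by eventually_elim auto
qed

lemma emeasure_claim_sum_less_tendsto_zero:
  "(\<lambda>m. emeasure S {\<omega>. (\<Sum>j\<le>m. Uj j \<omega>) < K}) \<longlonglongrightarrow> 0"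
proof (rule tendsto_sandwich[OF _ _ tendsto_const])
  show "(\<lambda>m. emeasure S {\<omega> \<in> space S. (\<Sum>j\<le>m. Uj j \<omega>) \<le> K}) \<longlonglongrightarrow> 0"
    unfolding Uj_def Omega_def
    by (intro emeasure_PiM_iid_partial_sum_le_tendsto_zero prob_space_base_law
        base_law_components_measurable AE_base_law_pos)
  show "\<forall>\<^sub>F m in sequentially. emeasure S {\<omega>. (\<Sum>j\<le>m. Uj j \<omega>) < K}
      \<le> emeasure S {\<omega> \<in> space S. (\<Sum>j\<le>m. Uj j \<omega>) \<le> K}"
  proof (intro always_eventually allI emeasure_mono)
    fix m
    show "{\<omega> \<in> space S. (\<Sum>j\<le>m. Uj j \<omega>) \<le> K} \<in> sets S"
      unfolding Uj_def by measurable
  qed (auto simp: space_Omega)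
qed auto

lemma emeasure_Gam_greater_tendsto_zero:
  "((\<lambda>K. emeasure S {\<omega>. K < Gam m \<omega>}) \<longlongrightarrow> 0) at_top"
proof -
  interpret prob_space S
    by (rule prob_space_Omega)
  have "Gam m \<in> borel_measurable S"
    unfolding Gam_def by measurable
  then show ?thesis
    using emeasure_greater_tendsto_zero[of "Gam m"] by (simp add: space_Omega)
qed

end

section \<open>Sample paths\<close>

lemma partial_sums_mono:
  fixes a :: "nat \<Rightarrow> real"
  assumes "\<And>i. 0 < a i" and "k \<le> n"
  shows "(\<Sum>i\<le>k. a i) \<le> (\<Sum>i\<le>n. a i)"
  using assms by (intro sum_mono2) (auto intro: less_imp_le)

lemma finite_partial_sums_le:
  fixes a :: "nat \<Rightarrow> real"
  assumes pos: "\<And>i. 0 < a i" and unbounded: "\<forall>K. \<exists>k. K < (\<Sum>i\<le>k. a i)"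
  shows "finite {k. (\<Sum>i\<le>k. a i) \<le> t}"
proof -
  obtain n where n: "t < (\<Sum>i\<le>n. a i)"
    using unbounded by blast
  have "{k. (\<Sum>i\<le>k. a i) \<le> t} \<subseteq> {..<n}"
  proof
    fix k assume "k \<in> {k. (\<Sum>i\<le>k. a i) \<le> t}"
    with n have "\<not> (\<Sum>i\<le>n. a i) \<le> (\<Sum>i\<le>k. a i)"
      by auto
    then show "k \<in> {..<n}"
      using partial_sums_mono[of a n k, OF pos] by (meson not_le lessThan_iff)
  qed
  then show ?thesis
    by (rule finite_subset) simp
qed

locale regular_sample_path =
  fixes lb d l0 :: real and \<omega> :: omega
  assumes regular: "regular_path \<omega>" and lb: "0 \<le> lb" and l0: "lb \<le> l0" and d: "0 < d"
begin

abbreviation "la s \<equiv> lam lb d l0 s \<omega>"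
abbreviation "La t \<equiv> Lam lb d l0 t \<omega>"
abbreviation "ta j \<equiv> tau lb d l0 j \<omega>"

lemma components_pos: "0 < fst (fst (\<omega> i))" "0 < Yj i \<omega>" "0 < fst (snd (\<omega> i))" "0 < Uj i \<omega>"
  using regular by (simp_all add: regular_path_def Yj_def Uj_def)

lemma Tj_mono: "j \<le> k \<Longrightarrow> Tj j \<omega> \<le> Tj k \<omega>"
  unfolding Tj_def by (rule partial_sums_mono) (use components_pos in auto)

lemma Tj_pos: "0 < Tj k \<omega>"
  unfolding Tj_def using components_pos by (intro sum_pos) auto

lemma Gam_mono: "j \<le> k \<Longrightarrow> Gam j \<omega> \<le> Gam k \<omega>"
  unfolding Gam_def by (rule partial_sums_mono) (use components_pos in auto)

lemma finite_Tj_le: "finite {k. Tj k \<omega> \<le> t}"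
  unfolding Tj_def
  by (rule finite_partial_sums_le) (use regular components_pos in \<open>auto simp: regular_path_def Tj_def\<close>)

lemma finite_Gam_le: "finite {k. Gam k \<omega> \<le> t}"
  unfolding Gam_def
  by (rule finite_partial_sums_le) (use regular components_pos in \<open>auto simp: regular_path_def Gam_def\<close>)

text \<open>The index set no longer depends on s, which makes the intensity measurable on [0, c].\<close>

lemma lam_eq_sum_shots_before:
  assumes "s \<le> c"
  shows "la s = lb + exp (- d * s) * (l0 - lb) +
    (\<Sum>k\<in>{k. Tj k \<omega> \<le> c}. if Tj k \<omega> \<le> s then Yj k \<omega> * exp (- d * (s - Tj k \<omega>)) else 0)"
proof -
  have "{k. Tj k \<omega> \<le> s} = {k \<in> {k. Tj k \<omega> \<le> c}. Tj k \<omega> \<le> s}"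
    using assms by auto
  then have "(\<Sum>k\<in>{k. Tj k \<omega> \<le> s}. Yj k \<omega> * exp (- d * (s - Tj k \<omega>)))
      = (\<Sum>k\<in>{k. Tj k \<omega> \<le> c}. if Tj k \<omega> \<le> s then Yj k \<omega> * exp (- d * (s - Tj k \<omega>)) else 0)"
    by (simp only: sum.inter_filter[OF finite_Tj_le])
  then show ?thesis
    unfolding lam_def by simp
qed

lemma lam_lower: "lb + exp (- d * s) * (l0 - lb) \<le> la s"
  unfolding lam_def using components_pos
  by (simp add: sum_nonneg less_imp_le)

lemma lam_nonneg: "0 \<le> la s"
  using lam_lower[of s] lb l0 by (smt (verit) exp_ge_zero mult_nonneg_nonneg)

lemma lam_upper:
  assumes "0 \<le> s" "s \<le> c"
  shows "la s \<le> l0 + (\<Sum>k\<in>{k. Tj k \<omega> \<le> c}. Yj k \<omega>)"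
proof -
  have "exp (- d * s) * (l0 - lb) \<le> l0 - lb"
    using assms d l0 by (intro mult_left_le_one_le) auto
  moreover have "(\<Sum>k\<in>{k. Tj k \<omega> \<le> c}. if Tj k \<omega> \<le> s then Yj k \<omega> * exp (- d * (s - Tj k \<omega>)) else 0)
      \<le> (\<Sum>k\<in>{k. Tj k \<omega> \<le> c}. Yj k \<omega>)"
    using components_pos d by (intro sum_mono) (auto intro!: mult_left_le simp: less_imp_le)
  ultimately show ?thesis
    unfolding lam_eq_sum_shots_before[OF assms(2)] by linarith
qed

lemma set_integrable_lam: "set_integrable lborel {0..t} la"
proof -
  let ?g = "\<lambda>s. lb + exp (- d * s) * (l0 - lb) +
    (\<Sum>k\<in>{k. Tj k \<omega> \<le> t}. if Tj k \<omega> \<le> s then Yj k \<omega> * exp (- d * (s - Tj k \<omega>)) else 0)"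
  have "set_integrable lborel {0..t} ?g"
    unfolding set_integrable_def
  proof (rule integrableI_bounded_set_indicator[where B="l0 + (\<Sum>k\<in>{k. Tj k \<omega> \<le> t}. Yj k \<omega>)"])
    have "norm (?g s) \<le> l0 + (\<Sum>k\<in>{k. Tj k \<omega> \<le> t}. Yj k \<omega>)" if "s \<in> {0..t}" for s
      using that lam_eq_sum_shots_before[of s t] lam_nonneg[of s] lam_upper[of s t] by simp
    then show "AE s in lborel. s \<in> {0..t} \<longrightarrow> norm (?g s) \<le> l0 + (\<Sum>k\<in>{k. Tj k \<omega> \<le> t}. Yj k \<omega>)"
      by simp
  qed (auto simp: emeasure_lborel_Icc_eq)
  moreover have "(\<lambda>s. indicator {0..t} s *\<^sub>R ?g s) = (\<lambda>s. indicator {0..t} s *\<^sub>R la s)"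
    using lam_eq_sum_shots_before[of _ t] by (auto split: split_indicator)
  ultimately show ?thesis
    unfolding set_integrable_def by simp
qed

lemma Lam_eq_integral: "La t = (\<integral>s. indicator {0..t} s * la s \<partial>lborel)"
  unfolding Lam_def set_lebesgue_integral_def by simp

lemma Lam_mono: "t \<le> t' \<Longrightarrow> La t \<le> La t'"
  unfolding Lam_eq_integral
  using set_integrable_lam[of t] set_integrable_lam[of t'] lam_nonneg unfolding set_integrable_def
  by (intro integral_mono) (auto split: split_indicator)

lemma Lam_lower: "0 \<le> t \<Longrightarrow> (l0 - lb) * exp (- d * t) * t \<le> La t"
proof -
  assume t: "0 \<le> t"
  have "(l0 - lb) * exp (- d * t) \<le> la s" if "s \<in> {0..t}" for s
  proof -
    have "(l0 - lb) * exp (- d * t) \<le> exp (- d * s) * (l0 - lb)"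
      using that d l0 by (simp add: mult.commute mult_left_mono)
    then show ?thesis
      using lam_lower[of s] lb by linarith
  qed
  then have "(LINT s:{0..t}|lborel. (l0 - lb) * exp (- d * t)) \<le> (LINT s:{0..t}|lborel. la s)"
    using set_integrable_lam
    by (intro set_integral_mono) (auto simp: set_integrable_def emeasure_lborel_Icc_eq)
  then show ?thesis
    using t unfolding Lam_def
    by (subst (asm) set_integral_const) (auto simp: emeasure_lborel_Icc_eq mult.commute)
qed

lemma lam_ge_recent_shots:
  "(\<Sum>i\<le>k. Yj i \<omega> * exp (- d) * indicator {Tj i \<omega>..Tj i \<omega> + 1} s) \<le> la s"
proof -
  let ?A = "{i \<in> {..k}. Tj i \<omega> \<le> s \<and> s \<le> Tj i \<omega> + 1}"
  have "(\<Sum>i\<le>k. Yj i \<omega> * exp (- d) * indicator {Tj i \<omega>..Tj i \<omega> + 1} s)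
      = (\<Sum>i\<le>k. if Tj i \<omega> \<le> s \<and> s \<le> Tj i \<omega> + 1 then Yj i \<omega> * exp (- d) else 0)"
    by (intro sum.cong) (auto split: split_indicator)
  also have "\<dots> = (\<Sum>i\<in>?A. Yj i \<omega> * exp (- d))"
    by (rule sum.inter_filter[symmetric]) simp
  also have "\<dots> \<le> (\<Sum>i\<in>?A. Yj i \<omega> * exp (- d * (s - Tj i \<omega>)))"
    using components_pos d by (intro sum_mono mult_left_mono) (auto simp: less_imp_le)
  also have "\<dots> \<le> (\<Sum>i\<in>{i. Tj i \<omega> \<le> s}. Yj i \<omega> * exp (- d * (s - Tj i \<omega>)))"
    using components_pos by (intro sum_mono2 finite_Tj_le) (auto simp: less_imp_le)
  also have "\<dots> \<le> la s"
    using lb l0 unfolding lam_def by simp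
  finally show ?thesis .
qed

lemma Lam_ge_shots: "exp (- d) * (\<Sum>i\<le>k. Yj i \<omega>) \<le> La (Tj k \<omega> + 1)"
proof -
  let ?g = "\<lambda>s. \<Sum>i\<le>k. Yj i \<omega> * exp (- d) * indicator {Tj i \<omega>..Tj i \<omega> + 1} s"
  have int_shot: "integrable lborel (\<lambda>s. Yj i \<omega> * exp (- d) * indicator {Tj i \<omega>..Tj i \<omega> + 1} s :: real)"
    for i
    by (intro integrable_mult_right) (simp add: integrable_indicator_iff emeasure_lborel_Icc_eq)
  have int_g: "integrable lborel ?g"
    using int_shot by (intro Bochner_Integration.integrable_sum) auto
  have g_supp: "?g s = indicator {0..Tj k \<omega> + 1} s * ?g s" for s
  proof (cases "s \<in> {0..Tj k \<omega> + 1}")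
    case False
    have sub: "{Tj i \<omega>..Tj i \<omega> + 1} \<subseteq> {0..Tj k \<omega> + 1}" if "i \<le> k" for i
      using Tj_pos[of i] Tj_mono[OF that] by auto
    have "indicator {Tj i \<omega>..Tj i \<omega> + 1} s = (0::real)" if "i \<le> k" for i
      using False sub[OF that] by (auto split: split_indicator)
    with False show ?thesis
      by simp
  qed simp
  have "exp (- d) * (\<Sum>i\<le>k. Yj i \<omega>) = integral\<^sup>L lborel ?g"
    using int_shot by (subst Bochner_Integration.integral_sum) (auto simp: sum_distrib_left mult.commute)
  also have "\<dots> \<le> La (Tj k \<omega> + 1)"
    unfolding Lam_eq_integral
  proof (rule integral_mono)
    show "integrable lborel (\<lambda>s. indicator {0..Tj k \<omega> + 1} s * la s)"
      using set_integrable_lam unfolding set_integrable_def by simp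
    show "?g s \<le> indicator {0..Tj k \<omega> + 1} s * la s" for s
      using lam_ge_recent_shots[of s k] by (subst g_supp) (auto split: split_indicator)
  qed (rule int_g)
  finally show ?thesis .
qed

text \<open>Without this, tau j would be the junk value Inf {} for every j with Gam j beyond the
  supremum of the integrated intensity.\<close>

lemma Lam_unbounded: "\<exists>t\<ge>0. M \<le> La t"
proof -
  obtain k where k: "M * exp d < (\<Sum>i\<le>k. Yj i \<omega>)"
    using regular unfolding regular_path_def by blast
  then have "M \<le> exp (- d) * (\<Sum>i\<le>k. Yj i \<omega>)"
    by (simp add: exp_minus field_simps)
  also have "\<dots> \<le> La (Tj k \<omega> + 1)"
    by (rule Lam_ge_shots)
  finally show ?thesis
    using Tj_pos[of k] by (intro exI[of _ "Tj k \<omega> + 1"]) auto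
qed

lemma bdd_below_tau_set: "bdd_below {t. 0 \<le> t \<and> Gam j \<omega> \<le> La t}"
  by (rule bdd_belowI[of _ 0]) simp

lemma tau_le:
  assumes "0 \<le> t" and "Gam j \<omega> \<le> La t"
  shows "ta j \<le> t"
  unfolding tau_def using assms by (intro cInf_lower bdd_below_tau_set) simp

lemma Gam_le_Lam_of_tau_le:
  assumes "ta j \<le> t"
  shows "Gam j \<omega> \<le> La (t + 1)"
proof -
  let ?S = "{t. 0 \<le> t \<and> Gam j \<omega> \<le> La t}"
  have "?S \<noteq> {}"
    using Lam_unbounded[of "Gam j \<omega>"] by auto
  moreover have "Inf ?S < t + 1"
    using assms unfolding tau_def by simp
  ultimately obtain s where "s \<in> ?S" and "s < t + 1"
    using cInf_less_iff[OF _ bdd_below_tau_set] by blast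
  then show ?thesis
    using Lam_mono[of s "t + 1"] by auto
qed

lemma finite_claims_until: "finite {j. ta j \<le> t}"
  by (rule finite_subset[OF _ finite_Gam_le[of "La (t + 1)"]]) (auto intro: Gam_le_Lam_of_tau_le)

definition aggregate_claims :: "real \<Rightarrow> real" where
  "aggregate_claims t = (\<Sum>j\<in>{j. ta j \<le> t}. Uj j \<omega>)"

lemma surplus_eq: "surplus p lb d l0 x t \<omega> = x + p * t - aggregate_claims t"
  unfolding surplus_def aggregate_claims_def ..

lemma aggregate_claims_nonneg: "0 \<le> aggregate_claims t"
  unfolding aggregate_claims_def using components_pos by (intro sum_nonneg) (simp add: less_imp_le)

lemma aggregate_claims_mono: "t \<le> t' \<Longrightarrow> aggregate_claims t \<le> aggregate_claims t'"
  unfolding aggregate_claims_def using components_pos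
  by (intro sum_mono2 finite_claims_until) (auto simp: less_imp_le)

lemma sum_claims_le_aggregate_claims:
  assumes "0 \<le> t" and "Gam m \<omega> \<le> La t"
  shows "(\<Sum>j\<le>m. Uj j \<omega>) \<le> aggregate_claims t"
proof -
  have "ta j \<le> t" if "j \<le> m" for j
    using Gam_mono[OF that] assms by (intro tau_le) auto
  then have "{..m} \<subseteq> {j. ta j \<le> t}"
    by auto
  then show ?thesis
    unfolding aggregate_claims_def using components_pos
    by (intro sum_mono2 finite_claims_until) (auto simp: less_imp_le)
qed

lemma surplus_le_linear: "surplus p lb d l0 x t \<omega> \<le> x + p * t"
  using aggregate_claims_nonneg[of t] by (simp add: surplus_eq)

text \<open>Once claims of total size p R have arrived by time \<epsilon>, the premiums collected up to
  time t exceed them by at most p (t - R), which is dominated by p t^2 / R.\<close>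

lemma surplus_le_after_early_claims:
  assumes p: "0 < p" and eps: "0 < \<epsilon>" and R: "0 < R" and t: "0 \<le> t"
    and early: "Gam m \<omega> \<le> La \<epsilon>" and large: "p * R \<le> (\<Sum>j\<le>m. Uj j \<omega>)"
  shows "surplus p lb d l0 x t \<omega> \<le> x + p * \<epsilon> + p / R * t\<^sup>2"
proof (cases "t < \<epsilon>")
  case True
  then have "p * t \<le> p * \<epsilon>"
    using p by simp
  moreover have "0 \<le> p / R * t\<^sup>2"
    using p R by simp
  ultimately show ?thesis
    using surplus_le_linear[of p x t] by linarith
next
  case False
  have "p * R \<le> aggregate_claims \<epsilon>"
    using large sum_claims_le_aggregate_claims[OF _ early] eps by simp
  also have "\<dots> \<le> aggregate_claims t"
    using False by (intro aggregate_claims_mono) simp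
  finally have claims: "p * R \<le> aggregate_claims t" .
  have "0 \<le> (t - R)\<^sup>2" "0 \<le> t * R"
    using t R by simp_all
  then have "t * R - R\<^sup>2 \<le> t\<^sup>2"
    by (simp add: power2_diff)
  then have "p / R * (t * R - R\<^sup>2) \<le> p / R * t\<^sup>2"
    using p R by (intro mult_left_mono) auto
  moreover have "p * t - p * R = p / R * (t * R - R\<^sup>2)"
    using R by (simp add: field_simps power2_eq_square)
  moreover have "0 \<le> p * \<epsilon>"
    using p eps by simp
  ultimately show ?thesis
    unfolding surplus_eq using claims by linarith
qed

text \<open>The condition on Gam m says that the first m + 1 claims arrive before \<epsilon>, because
  (l0 - lb) e^(-d \<epsilon>) \<epsilon> \<le> Lam \<epsilon>.\<close>

lemma discounted_dividends_le:
  fixes L :: "real \<Rightarrow> real" and \<tau> :: ereal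
  assumes p: "0 < p" and q: "0 < q" and x: "0 \<le> x" and eps: "0 < \<epsilon>" and R: "0 < R"
    and mono: "mono_on {0..} L" and rc: "\<And>t. 0 \<le> t \<Longrightarrow> continuous (at_right t) L" and L0: "0 \<le> L 0"
    and L_le: "\<And>t. 0 \<le> t \<Longrightarrow> ereal t < \<tau> \<Longrightarrow> L t \<le> surplus p lb d l0 x t \<omega>"
  shows "(\<integral>\<^sup>+ s. indicator {s. 0 \<le> s \<and> ereal s < \<tau>} s * ennreal (exp (- q * s))
      \<partial>interval_measure (\<lambda>s. if s < 0 then 0 else L s))
    \<le> ennreal (x + p * \<epsilon> + 2 * (p / R) / q\<^sup>2) + (if Gam m \<omega> \<le> (l0 - lb) * exp (- d * \<epsilon>) * \<epsilon>
      \<and> p * R \<le> (\<Sum>j\<le>m. Uj j \<omega>) then 0 else ennreal (p / q))"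
proof -
  define early where "early \<longleftrightarrow> Gam m \<omega> \<le> (l0 - lb) * exp (- d * \<epsilon>) * \<epsilon> \<and> p * R \<le> (\<Sum>j\<le>m. Uj j \<omega>)"
  define c where "c = (if early then 0 else p)"
  have surplus_le: "surplus p lb d l0 x t \<omega> \<le> x + p * \<epsilon> + p / R * t\<^sup>2 + c * t" if t: "0 \<le> t" for t
  proof (cases early)
    case True
    then have "Gam m \<omega> \<le> La \<epsilon>" "p * R \<le> (\<Sum>j\<le>m. Uj j \<omega>)"
      using Lam_lower[of \<epsilon>] eps by (auto simp: early_def)
    with True show ?thesis
      using surplus_le_after_early_claims[OF p eps R t] by (simp add: c_def)
  next
    case False
    have "0 \<le> p * \<epsilon> + p / R * t\<^sup>2"
      using p eps R by simp
    with False show ?thesis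
      using surplus_le_linear[of p x t] by (simp add: c_def)
  qed
  have "(\<integral>\<^sup>+ s. indicator {s. 0 \<le> s \<and> ereal s < \<tau>} s * ennreal (exp (- q * s))
      \<partial>interval_measure (\<lambda>s. if s < 0 then 0 else L s)) \<le> ennreal (x + p * \<epsilon> + 2 * (p / R) / q\<^sup>2 + c / q)"
  proof (rule nn_integral_discounted_le_quadratic[OF mono rc L0 q])
    show "L t \<le> x + p * \<epsilon> + p / R * t\<^sup>2 + c * t" if "0 \<le> t" "ereal t < \<tau>" for t
      using L_le[OF that] surplus_le[OF that(1)] by simp
  qed (use x p eps R in \<open>auto simp: c_def\<close>)
  also have "\<dots> = ennreal (x + p * \<epsilon> + 2 * (p / R) / q\<^sup>2) + (if early then 0 else ennreal (p / q))"
    using x p q eps R by (simp add: c_def ennreal_plus)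
  finally show ?thesis
    unfolding early_def .
qed

end

section \<open>Bounds on the value function\<close>

context shot_noise_model
begin

lemma Jval_le_bad_events:
  fixes m :: nat
  assumes p: "0 < p" and q: "0 < q" and x: "0 \<le> x" and eps: "0 < \<epsilon>" and R: "0 < R"
    and d: "0 < d" and lb: "0 \<le> lb" and l0: "lb \<le> l0" and L: "L \<in> admissible S p lb d l0 x"
  defines "late \<equiv> {\<omega>. (l0 - lb) * exp (- d * \<epsilon>) * \<epsilon> < Gam m \<omega>}"
    and "small \<equiv> {\<omega>. (\<Sum>j\<le>m. Uj j \<omega>) < p * R}"
  shows "Jval S p q lb d l0 x L \<le> enn2ereal (ennreal (x + p * \<epsilon> + 2 * (p / R) / q\<^sup>2)
    + ennreal (p / q) * (emeasure S late + emeasure S small))"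
proof -
  let ?a = "x + p * \<epsilon> + 2 * (p / R) / q\<^sup>2"
  define J where "J \<omega> = (\<integral>\<^sup>+ s. indicator {s. 0 \<le> s \<and> ereal s < ruin_time p lb d l0 x L \<omega>} s
    * ennreal (exp (- q * s)) \<partial>interval_measure (\<lambda>s. if s < 0 then 0 else L s \<omega>))" for \<omega>
  have [measurable]: "late \<in> sets S" "small \<in> sets S"
  proof -
    have "{\<omega> \<in> space S. (l0 - lb) * exp (- d * \<epsilon>) * \<epsilon> < Gam m \<omega>} \<in> sets S"
      "{\<omega> \<in> space S. (\<Sum>j\<le>m. Uj j \<omega>) < p * R} \<in> sets S"
      unfolding Gam_def Uj_def by measurable
    then show "late \<in> sets S" "small \<in> sets S"
      by (simp_all add: late_def small_def space_Omega)
  qed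
  have "AE \<omega> in S. J \<omega> \<le> ennreal ?a + ennreal (p / q) * (indicator late \<omega> + indicator small \<omega>)"
    using AE_regular_path
  proof eventually_elim
    case (elim \<omega>)
    interpret regular_sample_path lb d l0 \<omega>
      using elim d lb l0 by unfold_locales
    have "J \<omega> \<le> ennreal ?a + (if Gam m \<omega> \<le> (l0 - lb) * exp (- d * \<epsilon>) * \<epsilon>
        \<and> p * R \<le> (\<Sum>j\<le>m. Uj j \<omega>) then 0 else ennreal (p / q))"
      unfolding J_def
    proof (rule discounted_dividends_le[OF p q x eps R])
      show "mono_on {0..} (\<lambda>t. L t \<omega>)" "0 \<le> L 0 \<omega>"
        "\<And>t. 0 \<le> t \<Longrightarrow> continuous (at_right t) (\<lambda>s. L s \<omega>)"
        "\<And>t. 0 \<le> t \<Longrightarrow> ereal t < ruin_time p lb d l0 x L \<omega> \<Longrightarrow> L t \<omega> \<le> surplus p lb d l0 x t \<omega>"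
        using L unfolding admissible_def by (auto simp: space_Omega)
    qed
    also have "\<dots> \<le> ennreal ?a + ennreal (p / q) * (indicator late \<omega> + indicator small \<omega>)"
    proof (cases "\<omega> \<in> late \<union> small")
      case True
      then have "1 \<le> (indicator late \<omega> + indicator small \<omega> :: ennreal)"
        by (auto split: split_indicator)
      then have "ennreal (p / q) \<le> ennreal (p / q) * (indicator late \<omega> + indicator small \<omega>)"
        using mult_left_mono[of 1 _ "ennreal (p / q)"] by simp
      with True show ?thesis
        by (auto simp: late_def small_def intro: add_left_mono)
    qed (simp add: late_def small_def not_less)
    finally show ?case
      by (simp add: J_def)
  qed
  then have "(\<integral>\<^sup>+ \<omega>. J \<omega> \<partial>completion S)
      \<le> (\<integral>\<^sup>+ \<omega>. ennreal ?a + ennreal (p / q) * (indicator late \<omega> + indicator small \<omega>) \<partial>S)"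
    by (subst nn_integral_completion[symmetric]) (intro nn_integral_mono_AE AE_completion)
  also have "\<dots> = ennreal ?a + ennreal (p / q) * (emeasure S late + emeasure S small)"
    by (intro prob_space.nn_integral_const_plus_indicators prob_space_Omega) simp_all
  finally show ?thesis
    unfolding Jval_def J_def by (subst (asm) less_eq_ennreal.rep_eq)
qed

lemma Vfun_le_of_bad_events:
  fixes m :: nat
  assumes p: "0 < p" and q: "0 < q" and x: "0 \<le> x" and eps: "0 < \<epsilon>" and R: "0 < R"
    and d: "0 < d" and lb: "0 \<le> lb" and l0: "lb \<le> l0" and \<eta>: "0 \<le> \<eta>\<^sub>1" "0 \<le> \<eta>\<^sub>2"
    and late: "ennreal (p / q) * emeasure S {\<omega>. (l0 - lb) * exp (- d * \<epsilon>) * \<epsilon> < Gam m \<omega>} \<le> \<eta>\<^sub>1"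
    and small: "ennreal (p / q) * emeasure S {\<omega>. (\<Sum>j\<le>m. Uj j \<omega>) < p * R} \<le> \<eta>\<^sub>2"
  shows "Vfun p q d beta lb FY FU x l0 \<le> ereal (x + p * \<epsilon> + 2 * (p / R) / q\<^sup>2 + \<eta>\<^sub>1 + \<eta>\<^sub>2)"
  unfolding Vfun_def
proof (rule SUP_least)
  fix L assume L: "L \<in> admissible S p lb d l0 x"
  let ?a = "x + p * \<epsilon> + 2 * (p / R) / q\<^sup>2"
  have "Jval S p q lb d l0 x L \<le> enn2ereal (ennreal ?a + ennreal (p / q) *
      (emeasure S {\<omega>. (l0 - lb) * exp (- d * \<epsilon>) * \<epsilon> < Gam m \<omega>} + emeasure S {\<omega>. (\<Sum>j\<le>m. Uj j \<omega>) < p * R}))"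
    by (rule Jval_le_bad_events[OF p q x eps R d lb l0 L])
  also have "\<dots> \<le> enn2ereal (ennreal ?a + (ennreal \<eta>\<^sub>1 + ennreal \<eta>\<^sub>2))"
    unfolding less_eq_ennreal.rep_eq[symmetric] distrib_left
    using late small by (intro add_left_mono add_mono)
  also have "\<dots> = ereal (?a + \<eta>\<^sub>1 + \<eta>\<^sub>2)"
    using x p q eps R \<eta> by (simp add: ennreal_plus[symmetric] add.assoc del: ennreal_plus)
  finally show "Jval S p q lb d l0 x L \<le> ereal (?a + \<eta>\<^sub>1 + \<eta>\<^sub>2)" .
qed

lemma eventually_Vfun_le:
  assumes p: "0 < p" and q: "0 < q" and d: "0 < d" and lb: "0 \<le> lb" and \<delta>: "0 < \<delta>"
  shows "\<forall>\<^sub>F l0 in at_top. \<forall>x\<ge>0. Vfun p q d beta lb FY FU x l0 \<le> ereal (x + \<delta>)"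
proof -
  txt \<open>\<epsilon> and R make the deterministic part of the bound equal to \<delta> / 2; then m is chosen to make
    small claims unlikely, and finally l0 is taken large enough to make late claims unlikely.\<close>
  define \<epsilon> where "\<epsilon> = \<delta> / (4 * p)"
  define R where "R = 8 * p / (q\<^sup>2 * \<delta>)"
  define K where "K l0 = (l0 - lb) * exp (- d * \<epsilon>) * \<epsilon>" for l0
  have eps: "0 < \<epsilon>" and R: "0 < R"
    using p q \<delta> by (simp_all add: \<epsilon>_def R_def)
  have total: "x + p * \<epsilon> + 2 * (p / R) / q\<^sup>2 + \<delta> / 4 + \<delta> / 4 = x + \<delta>" for x
    using p q \<delta> by (simp add: \<epsilon>_def R_def field_simps power2_eq_square)
  have quarter: "0 < ennreal (\<delta> / 4)"
    using \<delta> by simp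
  have "(\<lambda>m. ennreal (p / q) * emeasure S {\<omega>. (\<Sum>j\<le>m. Uj j \<omega>) < p * R}) \<longlonglongrightarrow> ennreal (p / q) * 0"
    by (intro ennreal_tendsto_cmult emeasure_claim_sum_less_tendsto_zero) simp
  then have "\<forall>\<^sub>F m in sequentially. ennreal (p / q) * emeasure S {\<omega>. (\<Sum>j\<le>m. Uj j \<omega>) < p * R} < \<delta> / 4"
    using quarter by (simp add: order_tendstoD(2))
  then obtain m where m: "ennreal (p / q) * emeasure S {\<omega>. (\<Sum>j\<le>m. Uj j \<omega>) < p * R} < \<delta> / 4"
    by (auto simp: eventually_sequentially)
  have "filterlim (\<lambda>l0. - lb + l0) at_top at_top"
    by (rule filterlim_tendsto_add_at_top[OF tendsto_const filterlim_ident])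
  then have "filterlim (\<lambda>l0. (- lb + l0) * (exp (- d * \<epsilon>) * \<epsilon>)) at_top at_top"
    using eps by (intro filterlim_at_top_mult_tendsto_pos[OF tendsto_const]) simp_all
  then have "filterlim K at_top at_top"
    unfolding K_def by (simp add: mult.assoc)
  then have "((\<lambda>l0. ennreal (p / q) * emeasure S {\<omega>. K l0 < Gam m \<omega>}) \<longlongrightarrow> ennreal (p / q) * 0) at_top"
    by (intro ennreal_tendsto_cmult filterlim_compose[OF emeasure_Gam_greater_tendsto_zero]) simp_all
  then have "\<forall>\<^sub>F l0 in at_top. ennreal (p / q) * emeasure S {\<omega>. K l0 < Gam m \<omega>} < \<delta> / 4"
    using quarter by (simp add: order_tendstoD(2))
  moreover have "\<forall>\<^sub>F l0 in at_top. lb \<le> l0"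
    by (rule eventually_ge_at_top)
  ultimately show ?thesis
  proof eventually_elim
    case (elim l0)
    show ?case
    proof (intro allI impI)
      fix x :: real assume x: "0 \<le> x"
      have "Vfun p q d beta lb FY FU x l0 \<le> ereal (x + p * \<epsilon> + 2 * (p / R) / q\<^sup>2 + \<delta> / 4 + \<delta> / 4)"
        using elim m \<delta> unfolding K_def
        by (intro Vfun_le_of_bad_events[OF p q x eps R d lb, where m=m]) (simp_all add: less_imp_le)
      then show "Vfun p q d beta lb FY FU x l0 \<le> ereal (x + \<delta>)"
        by (simp only: total)
    qed
  qed
qed

end

lemma Lleft_zero: "Lleft (\<lambda>t \<omega>. 0) t \<omega> = 0"
  unfolding Lleft_def by (auto intro!: tendsto_Lim trivial_limit_at_left_real)

lemma zero_admissible: "(\<lambda>t \<omega>. 0) \<in> admissible M p lb d l0 x"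
  unfolding admissible_def
proof (intro CollectI conjI ballI allI impI)
  fix \<omega> t assume t: "0 \<le> t" and before_ruin: "ereal t < ruin_time p lb d l0 x (\<lambda>t \<omega>. 0) \<omega>"
  show "(0::real) \<le> surplus p lb d l0 x t \<omega>"
  proof (rule ccontr)
    assume "\<not> 0 \<le> surplus p lb d l0 x t \<omega>"
    with t have "ruin_time p lb d l0 x (\<lambda>t \<omega>. 0) \<omega> \<le> ereal t"
      unfolding ruin_time_def by (intro Inf_lower) (auto simp: Lleft_zero)
    with before_ruin show False
      by simp
  qed
next
  fix t :: real and B :: "real set"
  have "(\<lambda>\<omega>. 0::real) -` B \<inter> space M = (if (0::real) \<in> B then space M else {})"
    by auto
  then show "(\<lambda>\<omega>. 0::real) -` B \<inter> space M \<in> filt M lb d l0 t"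
    unfolding filt_def by (auto intro: sigma_sets_top sigma_sets.Empty)
qed (auto intro: mono_onI)

lemma Vfun_nonneg: "0 \<le> Vfun p q d beta lb FY FU x l0"
proof -
  have "0 \<le> Jval (Omega beta FY FU) p q lb d l0 x (\<lambda>t \<omega>. 0)"
    unfolding Jval_def by simp
  also have "\<dots> \<le> Vfun p q d beta lb FY FU x l0"
    unfolding Vfun_def by (rule SUP_upper[OF zero_admissible])
  finally show ?thesis .
qed

theorem proposition5p2:
  fixes p q d beta lb eta lav :: real and FY FU :: "real measure"
  assumes "p > 0" and "q > 0" and "d > 0" and "beta > 0" and "lb \<ge> 0"
    and "prob_space FY" and "sets FY = sets borel" and "AE y in FY. y > 0" and "integrable FY (\<lambda>y. y)"
    and "prob_space FU" and "sets FU = sets borel" and "AE u in FU. u > 0" and "integrable FU (\<lambda>u. u)"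
    and "eta > 0"
    and "\<forall>l0\<ge>lb. ((\<lambda>t. (\<integral>\<omega>. Lam lb d l0 t \<omega> \<partial>Omega beta FY FU) / t) \<longlongrightarrow> lav) at_top"
    and "p = (1 + eta) * (\<integral>u. u \<partial>FU) * lav"
  shows "((\<lambda>l0. SUP x\<in>{0::real..}. Vfun p q d beta lb FY FU x l0 - ereal x) \<longlongrightarrow> 0) at_top"
proof -
  interpret shot_noise_model beta FY FU
    using assms(4,6-8,10-12) by (simp add: shot_noise_model_def)
  show ?thesis
  proof (rule ereal_tendsto_zeroI)
    show "\<forall>\<^sub>F l0 in at_top. 0 \<le> (SUP x\<in>{0..}. Vfun p q d beta lb FY FU x l0 - ereal x)"
      by (intro always_eventually allI SUP_upper2[of 0]) (simp_all add: Vfun_nonneg)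
    fix \<delta> :: real assume "0 < \<delta>"
    with assms(1,2,3,5) have "\<forall>\<^sub>F l0 in at_top. \<forall>x\<ge>0. Vfun p q d beta lb FY FU x l0 \<le> ereal (x + \<delta>)"
      by (intro eventually_Vfun_le)
    then show "\<forall>\<^sub>F l0 in at_top. (SUP x\<in>{0..}. Vfun p q d beta lb FY FU x l0 - ereal x) \<le> ereal \<delta>"
      by (rule eventually_mono) (auto intro!: SUP_least simp: ereal_minus_le add.commute)
  qed
qed

end
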